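(* Consider Algorithm MWHVC (described in the context) run on a hypergraph $G=(V,E)$ of rank $f$ and maximum degree $\Delta$ with nonnegative vertex weights $w$, with parameters $\varepsilon\in(0,1]$, $\beta=\varepsilon/(f+\varepsilon)$ and multiplier $\alpha>1$. For every hyperedge $e$, the number of $e$-raise iterations is at most $\log_\alpha\Delta$.
   Context: Let $G=(V,E)$ be a hypergraph: each hyperedge is a nonempty subset of $V$ of size at most $f$ (rank $f$). Vertices have nonnegative weights $w(v)$. For $v\in V$, $E(v)=\{e\in E: v\in e\}$; $\Delta=\max_v |E(v)|\ge 3$. A hyperedge $e$ is covered by $C\subseteq V$ if $e\cap C\neq\emptyset$. The computation is distributed in synchronous rounds on the bipartite network with node set $V\cup E$ and a link between $v$ and $e$ iff $v\in e$. Parameters: $\varepsilon\in(0,1]$, $\beta=\varepsilon/(f+\varepsilon)$, and a multiplier $\alpha>1$. Algorithm MWHVC: Initialize $C\gets\emptyset$ and $E'(v)\gets E(v)$ for every $v$. Iteration $0$: every hyperedge $e$ sets $\mathrm{deal}_0(e)=\beta\cdot\min_{v\in e} w(v)/|E(v)|$ and $\delta_0(e)=\mathrm{deal}_0(e)$. For $i=1,2,\dots$: (a) every vertex $v\notin C$ (not terminated) checks whether $\sum_{e\in E(v)}\delta_{i-1}(e)\ge(1-\beta)w(v)$; if so, $v$ joins $C$, tells every $e\in E'(v)$ that $e$ is covered, and terminates. (b) Every uncovered hyperedge that receives such a message becomes covered, informs all its vertices, and terminates. (c) Every vertex $v\notin C$ that is told $e$ is covered sets $E'(v)\gets E'(v)\setminus\{e\}$;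 if $E'(v)=\emptyset$, $v$ terminates without joining $C$. (d) Every vertex $v\notin C$ sends "raise" to all $e\in E'(v)$ if $\sum_{e\in E'(v)}\mathrm{deal}_{i-1}(e)\le(\beta/\alpha)w(v)$, and otherwise sends "stuck" to all $e\in E'(v)$. (e) Every uncovered hyperedge $e$ sets $\mathrm{deal}_i(e)=\mathrm{deal}_{i-1}(e)$ if it received some "stuck" message, and $\mathrm{deal}_i(e)=\alpha\cdot\mathrm{deal}_{i-1}(e)$ otherwise, and $\delta_i(e)=\delta_{i-1}(e)+\mathrm{deal}_i(e)$. An iteration $i\ge 1$ is an $e$-raise iteration if $\mathrm{deal}_i(e)=\alpha\cdot\mathrm{deal}_{i-1}(e)$. *)

theory Defs
  imports Complex_Main
begin

text \<open>Hypergraph: vertex set V, hyperedges E :: 'v set set (each a nonempty subset of V).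
  The whole state of Algorithm MWHVC after iteration i is modelled centrally.\<close>

definition Einc :: "'v set set \<Rightarrow> 'v \<Rightarrow> 'v set set" where
  "Einc E v = {e \<in> E. v \<in> e}"

definition maxdeg :: "'v set \<Rightarrow> 'v set set \<Rightarrow> nat" where
  "maxdeg V E = Max ((\<lambda>v. card (Einc E v)) ` V)"

record 'v mstate =
  inC   :: "'v set"
  trm   :: "'v set"            \<comment> \<open>terminated vertices (in C or with E'(v) empty)\<close>
  cov   :: "'v set set"
  Ep    :: "'v \<Rightarrow> 'v set set"
  deal  :: "'v set \<Rightarrow> real"
  dlt   :: "'v set \<Rightarrow> real"

definition init_state :: "'v set set \<Rightarrow> ('v \<Rightarrow> real) \<Rightarrow> real \<Rightarrow> 'v mstate" where
  "init_state E w \<beta> =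
     (let d = (\<lambda>e. \<beta> * Min ((\<lambda>v. w v / real (card (Einc E v))) ` e))
      in \<lparr> inC = {}, trm = {}, cov = {}, Ep = Einc E, deal = d, dlt = d \<rparr>)"

definition step :: "'v set \<Rightarrow> 'v set set \<Rightarrow> ('v \<Rightarrow> real) \<Rightarrow> real \<Rightarrow> real \<Rightarrow> 'v mstate \<Rightarrow> 'v mstate" where
  "step V E w \<beta> \<alpha> s =
     (let \<comment> \<open>(a) non-terminated vertices that join C\<close>
          J = {v \<in> V. v \<notin> trm s \<and> (\<Sum>e\<in>Einc E v. dlt s e) \<ge> (1 - \<beta>) * w v};
          \<comment> \<open>(b) hyperedges informed by a joining vertex become covered\<close>
          newcov = {e \<in> E - cov s. \<exists>v\<in>J. e \<in> Ep s v};
          cov' = cov s \<union> newcov;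
          \<comment> \<open>(c) remaining vertices drop covered edges, terminate if E'(v) empty\<close>
          Ep' = (\<lambda>v. if v \<notin> trm s \<and> v \<notin> J then Ep s v - newcov else Ep s v);
          trm' = trm s \<union> J \<union> {v \<in> V. v \<notin> trm s \<and> v \<notin> J \<and> Ep' v = {}};
          \<comment> \<open>(d) active vertices send stuck (or raise) to all e in E'(v)\<close>
          stuck = (\<lambda>v. v \<in> V \<and> v \<notin> trm' \<and> \<not> ((\<Sum>e\<in>Ep' v. deal s e) \<le> (\<beta> / \<alpha>) * w v));
          \<comment> \<open>(e) uncovered hyperedges update deal and delta\<close>
          deal' = (\<lambda>e. if e \<in> E \<and> e \<notin> cov' then
                          (if \<exists>v\<in>e. stuck v \<and> e \<in> Ep' v then deal s e else \<alpha> * deal s e)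
                        else deal s e);
          dlt' = (\<lambda>e. if e \<in> E \<and> e \<notin> cov' then dlt s e + deal' e else dlt s e)
      in \<lparr> inC = inC s \<union> J, trm = trm', cov = cov', Ep = Ep', deal = deal', dlt = dlt' \<rparr>)"

fun mwhvc :: "'v set \<Rightarrow> 'v set set \<Rightarrow> ('v \<Rightarrow> real) \<Rightarrow> real \<Rightarrow> real \<Rightarrow> nat \<Rightarrow> 'v mstate" where
  "mwhvc V E w \<beta> \<alpha> 0 = init_state E w \<beta>"
| "mwhvc V E w \<beta> \<alpha> (Suc i) = step V E w \<beta> \<alpha> (mwhvc V E w \<beta> \<alpha> i)"

text \<open>Iteration i \<ge> 1 is an e-raise iteration: e is still uncovered (so deal_i(e) is
  defined by step (e)) and deal_i(e) = alpha * deal_{i-1}(e).\<close>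
definition raise_iter :: "'v set \<Rightarrow> 'v set set \<Rightarrow> ('v \<Rightarrow> real) \<Rightarrow> real \<Rightarrow> real \<Rightarrow> 'v set \<Rightarrow> nat \<Rightarrow> bool" where
  "raise_iter V E w \<beta> \<alpha> e i \<longleftrightarrow>
     1 \<le> i \<and> e \<in> E \<and> e \<notin> cov (mwhvc V E w \<beta> \<alpha> i) \<and>
     deal (mwhvc V E w \<beta> \<alpha> i) e = \<alpha> * deal (mwhvc V E w \<beta> \<alpha> (i - 1)) e"

end

theory Submission imports Defs begin

text \<open>Let u be a vertex of e minimising w(v)/|E(v)|, so that deal_0(e) = \<beta> w(u)/|E(u)|.
  If w(u) = 0, then u joins the cover in the first iteration and e is never raised.
  Otherwise every raise multiplies deal(e) by \<alpha>, and in a raise iteration i the vertex u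
  is still active and sent "raise", so
  deal_{i-1}(e) \<le> \<Sum>{deal_{i-1}(e') | e' \<in> E'(u)} \<le> \<beta> w(u)/\<alpha>.
  After k raises this gives \<alpha>^k \<beta> w(u)/|E(u)| \<le> \<beta> w(u), i.e. \<alpha>^k \<le> |E(u)| \<le> \<Delta>.\<close>

lemma cov_step_mono: "cov s \<subseteq> cov (step V E w \<beta> \<alpha> s)"
  by (auto simp: step_def Let_def)

lemma Ep_step_subset: "Ep (step V E w \<beta> \<alpha> s) v \<subseteq> Ep s v"
  by (auto simp: step_def Let_def)

lemma deal_step:
  "deal (step V E w \<beta> \<alpha> s) x =
    (if x \<in> E \<and> x \<notin> cov (step V E w \<beta> \<alpha> s) then
       (if \<exists>v\<in>x. v \<in> V \<and> v \<notin> trm (step V E w \<beta> \<alpha> s)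
                 \<and> \<not> (\<Sum>y\<in>Ep (step V E w \<beta> \<alpha> s) v. deal s y) \<le> \<beta> / \<alpha> * w v
                 \<and> x \<in> Ep (step V E w \<beta> \<alpha> s) v
        then deal s x else \<alpha> * deal s x)
     else deal s x)"
  by (simp only: step_def Let_def mstate.select_convs conj_assoc)

lemma deal_step_cases:
  "deal (step V E w \<beta> \<alpha> s) x = deal s x \<or> deal (step V E w \<beta> \<alpha> s) x = \<alpha> * deal s x"
  using deal_step[of V E w \<beta> \<alpha> s x] by (auto split: if_splits)

lemma deal_step_if_covered:
  "x \<in> cov (step V E w \<beta> \<alpha> s) \<Longrightarrow> deal (step V E w \<beta> \<alpha> s) x = deal s x"
  by (subst deal_step) simp

lemma uncovered_step_stays_active:
  assumes "e \<in> E" "e \<notin> cov (step V E w \<beta> \<alpha> s)" "v \<in> e"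
    and "\<forall>v\<in>e. v \<notin> trm s \<and> e \<in> Ep s v"
  shows "v \<notin> trm (step V E w \<beta> \<alpha> s) \<and> e \<in> Ep (step V E w \<beta> \<alpha> s) v"
  using assms by (auto simp: step_def Let_def split: if_splits)

lemma covered_step_if_joins:
  assumes "u \<in> V" "u \<notin> trm s" "(1 - \<beta>) * w u \<le> (\<Sum>x\<in>Einc E u. dlt s x)"
    and "x \<in> E" "x \<notin> cov s" "x \<in> Ep s u"
  shows "x \<in> cov (step V E w \<beta> \<alpha> s)"
  using assms by (auto simp: step_def Let_def)

lemma raised_step_sum_le:
  assumes "e \<in> E" "e \<notin> cov (step V E w \<beta> \<alpha> s)" "deal (step V E w \<beta> \<alpha> s) e \<noteq> deal s e"
    and "u \<in> e" "u \<in> V" "u \<notin> trm (step V E w \<beta> \<alpha> s)" "e \<in> Ep (step V E w \<beta> \<alpha> s) u"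
  shows "(\<Sum>x\<in>Ep (step V E w \<beta> \<alpha> s) u. deal s x) \<le> \<beta> / \<alpha> * w u"
  using assms deal_step[of V E w \<beta> \<alpha> s e] by (auto split: if_splits)

lemma card_Einc_le_maxdeg: "finite V \<Longrightarrow> v \<in> V \<Longrightarrow> card (Einc E v) \<le> maxdeg V E"
  unfolding maxdeg_def by (intro Max_ge) auto

lemma finite_card_le_log_if_powers_bounded:
  fixes R :: "'a set" and \<alpha> D :: real
  assumes "1 < \<alpha>" "0 < D" and bounded: "\<And>F. finite F \<Longrightarrow> F \<subseteq> R \<Longrightarrow> \<alpha> ^ card F \<le> D"
  shows "finite R \<and> real (card R) \<le> log \<alpha> D"
proof -
  have card_le: "real (card F) \<le> log \<alpha> D" if "finite F" "F \<subseteq> R" for F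
  proof -
    have "\<alpha> powr real (card F) \<le> D"
      using bounded[OF that] assms(1) by (simp add: powr_realpow)
    then show ?thesis using assms(1,2) by (simp add: le_log_iff)
  qed
  have "finite R"
  proof (rule ccontr)
    assume "infinite R"
    then obtain F where "finite F" "F \<subseteq> R" and card_F: "card F = Suc (nat \<lceil>log \<alpha> D\<rceil>)"
      using infinite_arbitrarily_large by blast
    then have "real (Suc (nat \<lceil>log \<alpha> D\<rceil>)) \<le> log \<alpha> D" using card_le by metis
    then show False by linarith
  qed
  with card_le show ?thesis by blast
qed

locale mwhvc_run =
  fixes V :: "'v set" and E :: "'v set set" and w :: "'v \<Rightarrow> real" and \<beta> \<alpha> :: real
  assumes finite_V: "finite V"
    and edges: "\<forall>e\<in>E. e \<noteq> {} \<and> e \<subseteq> V"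
    and weights_nonneg: "\<forall>v\<in>V. 0 \<le> w v"
    and beta_pos: "0 < \<beta>"
    and alpha_gt_1: "1 < \<alpha>"
begin

abbreviation state :: "nat \<Rightarrow> 'v mstate" where
  "state \<equiv> mwhvc V E w \<beta> \<alpha>"

abbreviation raises :: "'v set \<Rightarrow> nat set" where
  "raises e \<equiv> {i. raise_iter V E w \<beta> \<alpha> e i}"

lemma finite_E: "finite E"
  using edges finite_V by (intro finite_subset[of E "Pow V"]) auto

lemma finite_edge: "x \<in> E \<Longrightarrow> finite x"
  using edges finite_V finite_subset by blast

lemma card_Einc_pos: "e \<in> E \<Longrightarrow> u \<in> e \<Longrightarrow> 0 < card (Einc E u)"
  using finite_E by (auto simp: Einc_def card_gt_0_iff)

lemma deal_init: "deal (state 0) x = \<beta> * Min ((\<lambda>v. w v / real (card (Einc E v))) ` x)"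
  by (simp add: init_state_def Let_def)

lemma deal_init_nonneg:
  assumes "x \<in> E" shows "0 \<le> deal (state 0) x"
proof -
  have "0 \<le> Min ((\<lambda>v. w v / real (card (Einc E v))) ` x)"
    using assms edges weights_nonneg finite_edge[OF assms]
    by (subst Min_ge_iff) (auto intro!: divide_nonneg_nonneg)
  then show ?thesis unfolding deal_init using beta_pos by simp
qed

lemma deal_nonneg: "x \<in> E \<Longrightarrow> 0 \<le> deal (state i) x"
proof (induction i)
  case 0 then show ?case by (rule deal_init_nonneg)
next
  case (Suc i)
  then show ?case using deal_step_cases[of V E w \<beta> \<alpha> "state i" x] alpha_gt_1 by auto
qed

lemma Ep_subset_E: "Ep (state i) v \<subseteq> E"
proof (induction i)
  case 0 then show ?case by (auto simp: init_state_def Let_def Einc_def)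
next
  case (Suc i) then show ?case using Ep_step_subset by (metis mwhvc.simps(2) order_trans)
qed

lemma cov_mono: "i \<le> j \<Longrightarrow> cov (state i) \<subseteq> cov (state j)"
  by (rule lift_Suc_mono_le[of "\<lambda>i. cov (state i)"]) (simp add: cov_step_mono)

lemma uncovered_active:
  assumes "e \<in> E" "e \<notin> cov (state i)" "v \<in> e"
  shows "v \<notin> trm (state i) \<and> e \<in> Ep (state i) v"
  using assms(2,3)
proof (induction i arbitrary: v)
  case 0 then show ?case using assms(1) by (auto simp: init_state_def Let_def Einc_def)
next
  case (Suc i)
  have "e \<notin> cov (state i)" using Suc.prems(1) cov_mono[of i "Suc i"] by auto
  with Suc show ?case using uncovered_step_stays_active[OF assms(1)] by simp
qed

lemma deal_eq_power_card_raises: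
  assumes "e \<in> E"
  shows "deal (state N) e = \<alpha> ^ card (raises e \<inter> {..N}) * deal (state 0) e"
proof (induction N)
  case 0
  have "raises e \<inter> {..0} = {}" by (auto simp: raise_iter_def)
  then show ?case by simp
next
  case (Suc N)
  show ?case
  proof (cases "Suc N \<in> raises e")
    case True
    then have "raises e \<inter> {..Suc N} = insert (Suc N) (raises e \<inter> {..N})" by auto
    moreover have "deal (state (Suc N)) e = \<alpha> * deal (state N) e"
      using True by (simp add: raise_iter_def)
    ultimately show ?thesis using Suc.IH by simp
  next
    case False
    then have "raises e \<inter> {..Suc N} = raises e \<inter> {..N}" by (auto simp: le_Suc_eq)
    moreover have "deal (state (Suc N)) e = deal (state N) e"
    proof -
      have "e \<in> cov (state (Suc N)) \<or> deal (state (Suc N)) e \<noteq> \<alpha> * deal (state N) e"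
        using False assms by (simp add: raise_iter_def)
      then show ?thesis by (metis deal_step_if_covered deal_step_cases mwhvc.simps(2))
    qed
    ultimately show ?thesis using Suc.IH by simp
  qed
qed

text \<open>If deal_N(e) = 0 the raise tells nothing about the vertices of e, since then
  deal_{N+1}(e) = \<alpha> deal_N(e) holds even when some vertex is stuck.\<close>

lemma raise_deal_le:
  assumes "Suc N \<in> raises e" "u \<in> e"
  shows "\<alpha> * deal (state N) e \<le> \<beta> * w u"
proof (cases "deal (state N) e = 0")
  case True
  have "u \<in> V" using assms edges by (auto simp: raise_iter_def)
  then show ?thesis using True weights_nonneg beta_pos by simp
next
  case False
  have eE: "e \<in> E" and uncov: "e \<notin> cov (state (Suc N))"
    and raised: "deal (state (Suc N)) e = \<alpha> * deal (state N) e"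
    using assms(1) by (auto simp: raise_iter_def)
  have uV: "u \<in> V" using eE assms(2) edges by auto
  have active: "u \<notin> trm (state (Suc N))" "e \<in> Ep (state (Suc N)) u"
    using uncovered_active[OF eE uncov assms(2)] by auto
  have "deal (state (Suc N)) e \<noteq> deal (state N) e"
    using False raised alpha_gt_1 by simp
  then have sum_le: "(\<Sum>x\<in>Ep (state (Suc N)) u. deal (state N) x) \<le> \<beta> / \<alpha> * w u"
    using raised_step_sum_le[OF eE _ _ assms(2) uV] uncov active by simp
  have "deal (state N) e \<le> (\<Sum>x\<in>Ep (state (Suc N)) u. deal (state N) x)"
  proof (rule member_le_sum[OF active(2)])
    show "finite (Ep (state (Suc N)) u)" using Ep_subset_E finite_E by (rule finite_subset)
  qed (use Ep_subset_E deal_nonneg in blast)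
  then have "\<alpha> * deal (state N) e \<le> \<alpha> * (\<beta> / \<alpha> * w u)"
    using sum_le alpha_gt_1 by (intro mult_left_mono) auto
  then show ?thesis using alpha_gt_1 by simp
qed

lemma covered_first_if_weight_zero:
  assumes "e \<in> E" "u \<in> e" "w u = 0"
  shows "e \<in> cov (state 1)"
proof -
  have uV: "u \<in> V" using assms edges by auto
  have "0 \<le> (\<Sum>x\<in>Einc E u. dlt (state 0) x)"
    using deal_init_nonneg by (intro sum_nonneg) (auto simp: Einc_def init_state_def Let_def)
  moreover have "u \<notin> trm (state 0)" "e \<notin> cov (state 0)" "e \<in> Ep (state 0) u"
    using assms by (auto simp: init_state_def Let_def Einc_def)
  ultimately show ?thesis
    using covered_step_if_joins[OF uV, of "state 0"] assms by simp
qed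

lemma raises_empty_if_weight_zero:
  assumes "e \<in> E" "u \<in> e" "w u = 0"
  shows "raises e = {}"
  using covered_first_if_weight_zero[OF assms] cov_mono[of 1] by (auto simp: raise_iter_def)

lemma minimal_vertex_of_edge:
  assumes "e \<in> E"
  obtains u where "u \<in> e" "deal (state 0) e = \<beta> * (w u / real (card (Einc E u)))"
proof -
  have "Min ((\<lambda>v. w v / real (card (Einc E v))) ` e) \<in> (\<lambda>v. w v / real (card (Einc E v))) ` e"
    using assms edges finite_edge[OF assms] by (intro Min_in) auto
  then obtain u where "u \<in> e" "Min ((\<lambda>v. w v / real (card (Einc E v))) ` e) = w u / real (card (Einc E u))"
    by blast
  then show ?thesis using that[of u] unfolding deal_init by simp
qed

lemma power_card_raises_le_degree:
  assumes "e \<in> E" "u \<in> e" "0 < w u" "deal (state 0) e = \<beta> * (w u / real (card (Einc E u)))"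
    and "i \<in> raises e"
  shows "\<alpha> ^ card (raises e \<inter> {..i}) \<le> real (card (Einc E u))"
proof -
  obtain N where i: "i = Suc N" using assms(5) by (cases i) (auto simp: raise_iter_def)
  define k where "k = card (raises e \<inter> {..N})"
  have "raises e \<inter> {..i} = insert i (raises e \<inter> {..N})" using assms(5) i by auto
  then have card_i: "card (raises e \<inter> {..i}) = Suc k" by (simp add: k_def i)
  have "0 < card (Einc E u)" using card_Einc_pos[OF assms(1,2)] .
  moreover have "\<alpha> * (\<alpha> ^ k * (\<beta> * (w u / real (card (Einc E u))))) \<le> \<beta> * w u"
    using raise_deal_le[OF assms(5)[unfolded i] assms(2)] deal_eq_power_card_raises[OF assms(1)]
      assms(4) by (simp add: k_def)
  ultimately have "\<alpha> ^ Suc k * (\<beta> * w u) \<le> real (card (Einc E u)) * (\<beta> * w u)"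
    by (simp add: field_simps)
  then show ?thesis using card_i beta_pos assms(3) by simp
qed

lemma power_card_raises_le_maxdeg:
  assumes "e \<in> E" "finite F" "F \<subseteq> raises e"
  shows "\<alpha> ^ card F \<le> real (maxdeg V E)"
proof -
  obtain u where u: "u \<in> e" "deal (state 0) e = \<beta> * (w u / real (card (Einc E u)))"
    using minimal_vertex_of_edge[OF assms(1)] .
  have uV: "u \<in> V" using assms(1) u(1) edges by auto
  have degree_le: "card (Einc E u) \<le> maxdeg V E"
    using card_Einc_le_maxdeg[OF finite_V uV] .
  show ?thesis
  proof (cases "F = {}")
    case True
    then show ?thesis using card_Einc_pos[OF assms(1) u(1)] degree_le by simp
  next
    case False
    then have "w u \<noteq> 0" using raises_empty_if_weight_zero[OF assms(1) u(1)] assms(3) by auto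
    then have "0 < w u" using weights_nonneg uV by (simp add: order_less_le)
    have "Max F \<in> raises e" using False assms(2,3) Max_in by blast
    have "card F \<le> card (raises e \<inter> {..Max F})"
      using assms(2,3) by (intro card_mono) auto
    then have "\<alpha> ^ card F \<le> \<alpha> ^ card (raises e \<inter> {..Max F})"
      using alpha_gt_1 by (intro power_increasing) auto
    also have "\<dots> \<le> real (card (Einc E u))"
      by (rule power_card_raises_le_degree) fact+
    also have "\<dots> \<le> real (maxdeg V E)" using degree_le by simp
    finally show ?thesis .
  qed
qed

end

theorem mainTheorem4:
  fixes V :: "'v set" and E :: "'v set set" and w :: "'v \<Rightarrow> real"
    and f :: nat and \<epsilon> \<alpha> :: real and e :: "'v set"
  assumes "finite V"
    and "\<forall>e\<in>E. e \<noteq> {} \<and> e \<subseteq> V \<and> card e \<le> f"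
    and "\<forall>v\<in>V. 0 \<le> w v"
    and "0 < \<epsilon>" and "\<epsilon> \<le> 1"
    and "1 < \<alpha>"
    and "3 \<le> maxdeg V E"
    and "e \<in> E"
  shows "finite {i. raise_iter V E w (\<epsilon> / (real f + \<epsilon>)) \<alpha> e i} \<and>
         real (card {i. raise_iter V E w (\<epsilon> / (real f + \<epsilon>)) \<alpha> e i}) \<le> log \<alpha> (real (maxdeg V E))"
proof -
  have maxdeg_pos: "0 < real (maxdeg V E)" using assms(7) by linarith
  interpret mwhvc_run V E w "\<epsilon> / (real f + \<epsilon>)" \<alpha>
    using assms(1-4,6) by unfold_locales auto
  show ?thesis
    using finite_card_le_log_if_powers_bounded[OF assms(6) maxdeg_pos]
      power_card_raises_le_maxdeg[OF assms(8)] by blast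
qed

end
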